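(* Let $p\colon X\to B$ be a Boolean set. For an ultrafilter $F$ of $B$ and $a\in X$ with $p(a)\in F$, let $[a]_F$ be the set of $b\in X$ with $p(b)\in F$ for which there exists $c\in X$ with $p(c)\in F$ and $c\le a$, $c\le b$. Then: for every ultrafilter $F$ of $B$ and every $a$ with $p(a)\in F$, the set $[a]_F$ is an ultrafilter of $(X,\le)$; every ultrafilter of $(X,\le)$ is of the form $[a]_F$ for some ultrafilter $F$ of $B$ and some $a$ with $p(a)\in F$; and $[a]_F\cap[b]_F\neq\emptyset$ implies $[a]_F=[b]_F$.
   Context: Convention: a "Boolean algebra" means a generalized Boolean algebra (relatively complemented distributive lattice with $0$). Presheaf of sets over a meet semilattice $E$: pairwise disjoint sets $X_e$, restriction maps $x\mapsto x|^e_f$ for $e\ge f$ with $|^e_e=\mathrm{id}$ and $(x|^e_f)|^f_g=x|^e_g$; $p(x)=e$ iff $x\in X_e$; global support: all $X_e\neq\emptyset$. Order: $x\le y$ iff $p(x)\le p(y)$ and $x=y|^{p(y)}_{p(x)}$. Compatibility $x\sim y$: $x\wedge y$ exists and $p(x\wedge y)=p(x)\wedge p(y)$. A Boolean set is a presheaf $p\colon X\to B$ with global support over a Boolean algebra $B$ such that $(X,\le)$ has least element $0$, compatible pairs have joins, and $p(x)=0\Rightarrow x=0$. In a poset, a filter is a non-empty, down directed, upwardly closed subset; proper if not the whole poset; an ultrafilter is a maximal proper filter. *)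

theory Defs
  imports Main
begin

definition gen_boolean_algebra :: "('b::{distrib_lattice, order_bot}) itself \<Rightarrow> bool" where
  "gen_boolean_algebra _ \<longleftrightarrow>
     (\<forall>a x b::'b. a \<le> x \<and> x \<le> b \<longrightarrow> (\<exists>y. inf x y = a \<and> sup x y = b))"

definition is_filter :: "'a set \<Rightarrow> ('a \<Rightarrow> 'a \<Rightarrow> bool) \<Rightarrow> 'a set \<Rightarrow> bool" where
  "is_filter S le F \<longleftrightarrow>
     F \<subseteq> S \<and> F \<noteq> {} \<and>
     (\<forall>x\<in>F. \<forall>y\<in>F. \<exists>z\<in>F. le z x \<and> le z y) \<and>
     (\<forall>x\<in>F. \<forall>y\<in>S. le x y \<longrightarrow> y \<in> F)"

definition is_proper_filter :: "'a set \<Rightarrow> ('a \<Rightarrow> 'a \<Rightarrow> bool) \<Rightarrow> 'a set \<Rightarrow> bool" where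
  "is_proper_filter S le F \<longleftrightarrow> is_filter S le F \<and> F \<noteq> S"

definition is_ultrafilter :: "'a set \<Rightarrow> ('a \<Rightarrow> 'a \<Rightarrow> bool) \<Rightarrow> 'a set \<Rightarrow> bool" where
  "is_ultrafilter S le F \<longleftrightarrow> is_proper_filter S le F \<and>
     (\<forall>G. is_proper_filter S le G \<and> F \<subseteq> G \<longrightarrow> G = F)"

definition is_meet :: "'a set \<Rightarrow> ('a \<Rightarrow> 'a \<Rightarrow> bool) \<Rightarrow> 'a \<Rightarrow> 'a \<Rightarrow> 'a \<Rightarrow> bool" where
  "is_meet S le x y m \<longleftrightarrow> m \<in> S \<and> le m x \<and> le m y \<and>
     (\<forall>z\<in>S. le z x \<and> le z y \<longrightarrow> le z m)"

definition is_join :: "'a set \<Rightarrow> ('a \<Rightarrow> 'a \<Rightarrow> bool) \<Rightarrow> 'a \<Rightarrow> 'a \<Rightarrow> 'a \<Rightarrow> bool" where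
  "is_join S le x y j \<longleftrightarrow> j \<in> S \<and> le x j \<and> le y j \<and>
     (\<forall>z\<in>S. le x z \<and> le y z \<longrightarrow> le j z)"

text \<open>The total set is the type 'x; p x is the support of x; res x f is the
restriction x|^{p x}_f (only meaningful for f \<le> p x). Disjointness of the
fibres X_e = p^{-1}(e) is automatic.\<close>

definition presheaf :: "('x \<Rightarrow> 'b::semilattice_inf) \<Rightarrow> ('x \<Rightarrow> 'b \<Rightarrow> 'x) \<Rightarrow> bool" where
  "presheaf p res \<longleftrightarrow>
     (\<forall>x f. f \<le> p x \<longrightarrow> p (res x f) = f) \<and>
     (\<forall>x. res x (p x) = x) \<and>
     (\<forall>x f g. g \<le> f \<and> f \<le> p x \<longrightarrow> res (res x f) g = res x g)"

definition global_support :: "('x \<Rightarrow> 'b) \<Rightarrow> bool" where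
  "global_support p \<longleftrightarrow> (\<forall>e. \<exists>x. p x = e)"

definition psh_le :: "('x \<Rightarrow> 'b::semilattice_inf) \<Rightarrow> ('x \<Rightarrow> 'b \<Rightarrow> 'x) \<Rightarrow> 'x \<Rightarrow> 'x \<Rightarrow> bool" where
  "psh_le p res x y \<longleftrightarrow> p x \<le> p y \<and> x = res y (p x)"

definition compatible :: "('x \<Rightarrow> 'b::semilattice_inf) \<Rightarrow> ('x \<Rightarrow> 'b \<Rightarrow> 'x) \<Rightarrow> 'x \<Rightarrow> 'x \<Rightarrow> bool" where
  "compatible p res x y \<longleftrightarrow>
     (\<exists>m. is_meet UNIV (psh_le p res) x y m \<and> p m = inf (p x) (p y))"

definition boolean_set :: "('x \<Rightarrow> 'b::{distrib_lattice, order_bot}) \<Rightarrow> ('x \<Rightarrow> 'b \<Rightarrow> 'x) \<Rightarrow> bool" where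
  "boolean_set p res \<longleftrightarrow>
     gen_boolean_algebra TYPE('b) \<and> presheaf p res \<and> global_support p \<and>
     (\<exists>z. (\<forall>x. psh_le p res z x) \<and> (\<forall>x. p x = bot \<longrightarrow> x = z)) \<and>
     (\<forall>x y. compatible p res x y \<longrightarrow> (\<exists>j. is_join UNIV (psh_le p res) x y j))"

definition uclass :: "('x \<Rightarrow> 'b::semilattice_inf) \<Rightarrow> ('x \<Rightarrow> 'b \<Rightarrow> 'x) \<Rightarrow> 'b set \<Rightarrow> 'x \<Rightarrow> 'x set" where
  "uclass p res F a = {b. p b \<in> F \<and> (\<exists>c. p c \<in> F \<and> psh_le p res c a \<and> psh_le p res c b)}"

end

theory Submission imports Defs begin

text \<open>The class [a]_F is a filter because two lower
bounds of a with supports in F have the restriction of a to the meet of their supports as a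
common lower bound. It is maximal: if a larger proper filter contained some w \<le> a with
p w \<notin> F, then F, being an ultrafilter, contains some f with inf f (p w) = 0, and w would share a
lower bound with a restricted to inf f (p a); that lower bound has support 0, so it is the least
element, which a proper filter cannot contain. Conversely, for an ultrafilter U of X the upward
closure F of p(U) is an ultrafilter of B: a proper filter G \<supseteq> F lifts, via restrictions of
elements of U to members of G, to a proper filter containing U, hence equal to U, and this
forces G \<subseteq> F. Then U \<subseteq> [a]_F for any a \<in> U, with equality by maximality of U.\<close>

lemma filter_inf_mem:
  fixes F :: "'b::semilattice_inf set"
  assumes "is_filter UNIV (\<le>) F" "x \<in> F" "y \<in> F"
  shows "inf x y \<in> F"
proof -
  obtain z where "z \<in> F" "z \<le> x" "z \<le> y" using assms unfolding is_filter_def by blast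
  then show ?thesis using assms(1) unfolding is_filter_def by (meson UNIV_I le_inf_iff)
qed

lemma filter_up: "is_filter S le F \<Longrightarrow> x \<in> F \<Longrightarrow> y \<in> S \<Longrightarrow> le x y \<Longrightarrow> y \<in> F"
  unfolding is_filter_def by blast

lemma filter_lower_bound: "is_filter S le F \<Longrightarrow> x \<in> F \<Longrightarrow> y \<in> F \<Longrightarrow> \<exists>z\<in>F. le z x \<and> le z y"
  unfolding is_filter_def by blast

lemma is_proper_filter_iff_least_notin:
  assumes "\<And>x. le z x"
  shows "is_proper_filter UNIV le F \<longleftrightarrow> is_filter UNIV le F \<and> z \<notin> F"
  using assms unfolding is_proper_filter_def is_filter_def by blast

lemma is_proper_filter_iff_bot_notin:
  "is_proper_filter UNIV (\<le>) (F :: 'b::order_bot set) \<longleftrightarrow> is_filter UNIV (\<le>) F \<and> bot \<notin> F"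
  by (rule is_proper_filter_iff_least_notin) simp

lemma ultrafilter_is_proper: "is_ultrafilter S le F \<Longrightarrow> is_proper_filter S le F"
  unfolding is_ultrafilter_def by blast

lemma ultrafilter_maximal:
  "is_ultrafilter S le F \<Longrightarrow> is_proper_filter S le G \<Longrightarrow> F \<subseteq> G \<Longrightarrow> G = F"
  unfolding is_ultrafilter_def by blast

lemma ultrafilter_disjoint_mem:
  fixes F :: "'b::{semilattice_inf, order_bot} set"
  assumes uf: "is_ultrafilter UNIV (\<le>) F" and "q \<notin> F"
  shows "\<exists>f\<in>F. inf f q = bot"
proof -
  have fF: "is_filter UNIV (\<le>) F"
    using ultrafilter_is_proper[OF uf] by (simp add: is_proper_filter_def)
  define G where "G = {x. \<exists>f\<in>F. inf f q \<le> x}"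
  have "is_filter UNIV (\<le>) G"
    unfolding is_filter_def
  proof (intro conjI ballI impI)
    show "G \<noteq> {}" using fF unfolding G_def is_filter_def by auto
  next
    fix x y assume "x \<in> G" "y \<in> G"
    then obtain f1 f2 where f: "f1 \<in> F" "f2 \<in> F" "inf f1 q \<le> x" "inf f2 q \<le> y"
      unfolding G_def by auto
    have "inf (inf f1 f2) q \<in> G" unfolding G_def using filter_inf_mem[OF fF f(1,2)] by blast
    moreover have "inf (inf f1 f2) q \<le> x" "inf (inf f1 f2) q \<le> y"
      using f(3,4) by (meson inf_le1 inf_le2 inf_mono order_refl order_trans)+
    ultimately show "\<exists>z\<in>G. z \<le> x \<and> z \<le> y" by blast
  qed (auto simp: G_def intro: order_trans)
  moreover have "F \<subseteq> G" unfolding G_def using inf_le1 by blast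
  moreover have "q \<in> G" using fF unfolding G_def is_filter_def by auto
  ultimately have "bot \<in> G"
    using uf \<open>q \<notin> F\<close> ultrafilter_maximal[of UNIV "(\<le>)" F G]
    unfolding is_proper_filter_iff_bot_notin by blast
  then show ?thesis unfolding G_def using bot_unique by blast
qed

locale presheaf_order =
  fixes p :: "'x \<Rightarrow> 'b::semilattice_inf" and res :: "'x \<Rightarrow> 'b \<Rightarrow> 'x"
  assumes presheaf: "presheaf p res"
begin

abbreviation le_psh :: "'x \<Rightarrow> 'x \<Rightarrow> bool" (infix "\<sqsubseteq>" 50)
  where "x \<sqsubseteq> y \<equiv> psh_le p res x y"

lemma supp_res: "f \<le> p x \<Longrightarrow> p (res x f) = f"
  using presheaf unfolding presheaf_def by blast

lemma res_supp [simp]: "res x (p x) = x"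
  using presheaf unfolding presheaf_def by blast

lemma res_res: "g \<le> f \<Longrightarrow> f \<le> p x \<Longrightarrow> res (res x f) g = res x g"
  using presheaf unfolding presheaf_def by blast

lemma le_psh_refl [simp]: "x \<sqsubseteq> x"
  by (simp add: psh_le_def)

lemma le_psh_supp: "x \<sqsubseteq> y \<Longrightarrow> p x \<le> p y"
  by (simp add: psh_le_def)

lemma res_eq_of_le_psh: "w \<sqsubseteq> y \<Longrightarrow> f \<le> p w \<Longrightarrow> res w f = res y f"
  unfolding psh_le_def by (metis res_res)

lemma le_psh_trans [trans]: "x \<sqsubseteq> y \<Longrightarrow> y \<sqsubseteq> w \<Longrightarrow> x \<sqsubseteq> w"
  unfolding psh_le_def by (metis order_trans res_res)

lemma res_le_psh: "f \<le> p x \<Longrightarrow> res x f \<sqsubseteq> x"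
  by (simp add: psh_le_def supp_res)

lemma res_le_psh_of_le_psh: "u \<sqsubseteq> y \<Longrightarrow> f \<le> p u \<Longrightarrow> res y f \<sqsubseteq> u"
  by (metis res_eq_of_le_psh res_le_psh)

lemma res_le_psh_res: "w \<sqsubseteq> u \<Longrightarrow> f \<le> e \<Longrightarrow> e \<le> p u \<Longrightarrow> f \<le> p w \<Longrightarrow> res w f \<sqsubseteq> res u e"
  by (metis res_eq_of_le_psh res_le_psh res_le_psh_of_le_psh supp_res)

lemma uclass_iff:
  "b \<in> uclass p res F a \<longleftrightarrow> p b \<in> F \<and> (\<exists>c. p c \<in> F \<and> c \<sqsubseteq> a \<and> c \<sqsubseteq> b)"
  by (simp add: uclass_def)

lemma self_in_uclass: "p a \<in> F \<Longrightarrow> a \<in> uclass p res F a"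
  by (auto simp: uclass_iff)

lemma uclass_sym: "p a \<in> F \<Longrightarrow> b \<in> uclass p res F a \<Longrightarrow> a \<in> uclass p res F b"
  unfolding uclass_iff by blast

lemma res_in_uclass: "f \<in> F \<Longrightarrow> f \<le> p a \<Longrightarrow> res a f \<in> uclass p res F a"
  unfolding uclass_iff by (metis le_psh_refl res_le_psh supp_res)

lemma common_res_below:
  assumes fF: "is_filter UNIV (\<le>) F" and "p c1 \<in> F" "p c2 \<in> F" "c1 \<sqsubseteq> a" "c2 \<sqsubseteq> a"
  shows "\<exists>d. p d \<in> F \<and> d \<sqsubseteq> c1 \<and> d \<sqsubseteq> c2 \<and> d \<sqsubseteq> a"
proof -
  define f where "f = inf (p c1) (p c2)"
  have "f \<in> F" unfolding f_def using filter_inf_mem[OF fF assms(2,3)] .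
  moreover have "res a f \<sqsubseteq> c1" "res a f \<sqsubseteq> c2"
    using res_le_psh_of_le_psh[OF assms(4)] res_le_psh_of_le_psh[OF assms(5)] by (simp_all add: f_def)
  moreover have "p (res a f) = f"
    using le_psh_supp[OF assms(4)] by (intro supp_res) (auto simp: f_def intro: le_infI1)
  ultimately show ?thesis using le_psh_trans[OF _ assms(4)] by metis
qed

lemma uclass_is_filter:
  assumes fF: "is_filter UNIV (\<le>) F" and pa: "p a \<in> F"
  shows "is_filter UNIV (\<sqsubseteq>) (uclass p res F a)"
  unfolding is_filter_def
proof (intro conjI ballI impI)
  show "uclass p res F a \<noteq> {}" using self_in_uclass[OF pa] by blast
next
  fix b1 b2 assume "b1 \<in> uclass p res F a" "b2 \<in> uclass p res F a"
  then obtain c1 c2 where c: "p c1 \<in> F" "c1 \<sqsubseteq> a" "c1 \<sqsubseteq> b1" "p c2 \<in> F" "c2 \<sqsubseteq> a" "c2 \<sqsubseteq> b2"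
    unfolding uclass_iff by blast
  then obtain d where d: "p d \<in> F" "d \<sqsubseteq> c1" "d \<sqsubseteq> c2" "d \<sqsubseteq> a"
    using common_res_below[OF fF] by blast
  then have "d \<in> uclass p res F a" unfolding uclass_iff using le_psh_refl by blast
  then show "\<exists>e\<in>uclass p res F a. e \<sqsubseteq> b1 \<and> e \<sqsubseteq> b2"
    using d c le_psh_trans by blast
next
  fix b y assume "b \<in> uclass p res F a" "b \<sqsubseteq> y"
  then show "y \<in> uclass p res F a"
    unfolding uclass_iff using filter_up[OF fF _ UNIV_I le_psh_supp] le_psh_trans by blast
qed auto

lemma uclass_subset:
  assumes fF: "is_filter UNIV (\<le>) F" and b: "b \<in> uclass p res F a"
  shows "uclass p res F b \<subseteq> uclass p res F a"
proof
  fix x assume "x \<in> uclass p res F b"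
  then obtain c where c: "p x \<in> F" "p c \<in> F" "c \<sqsubseteq> b" "c \<sqsubseteq> x"
    unfolding uclass_iff by blast
  obtain c' where c': "p c' \<in> F" "c' \<sqsubseteq> a" "c' \<sqsubseteq> b" using b unfolding uclass_iff by blast
  obtain d where "p d \<in> F" "d \<sqsubseteq> c" "d \<sqsubseteq> c'" using common_res_below[OF fF c(2) c'(1) c(3) c'(3)]
    by blast
  then show "x \<in> uclass p res F a"
    unfolding uclass_iff using c(1,4) c'(2) le_psh_trans by blast
qed

lemma uclass_eq_of_mem:
  "is_filter UNIV (\<le>) F \<Longrightarrow> p a \<in> F \<Longrightarrow> b \<in> uclass p res F a \<Longrightarrow> uclass p res F b = uclass p res F a"
  using uclass_subset[of F b a] uclass_subset[of F a b] uclass_sym[of a F b] uclass_iff[of b F a]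
  by blast

lemma uclass_eq_of_not_disjoint:
  assumes "is_filter UNIV (\<le>) F" "p a \<in> F" "p b \<in> F" "uclass p res F a \<inter> uclass p res F b \<noteq> {}"
  shows "uclass p res F a = uclass p res F b"
proof -
  obtain d where "d \<in> uclass p res F a" "d \<in> uclass p res F b" using assms(4) by blast
  with uclass_eq_of_mem[OF assms(1,2)] uclass_eq_of_mem[OF assms(1,3)] show ?thesis by metis
qed

end

locale pointed_presheaf = presheaf_order p res
  for p :: "'x \<Rightarrow> 'b::{semilattice_inf, order_bot}" and res +
  fixes z :: 'x
  assumes zero_le_psh: "z \<sqsubseteq> x"
    and supp_eq_bot_iff: "p x = bot \<longleftrightarrow> x = z"
begin

lemma is_proper_filter_psh_iff: "is_proper_filter UNIV (\<sqsubseteq>) U \<longleftrightarrow> is_filter UNIV (\<sqsubseteq>) U \<and> z \<notin> U"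
  by (rule is_proper_filter_iff_least_notin) (rule zero_le_psh)

lemma uclass_is_proper_filter:
  assumes "is_proper_filter UNIV (\<le>) F" "p a \<in> F"
  shows "is_proper_filter UNIV (\<sqsubseteq>) (uclass p res F a)"
proof -
  have "is_filter UNIV (\<le>) F" "bot \<notin> F" using assms(1) unfolding is_proper_filter_iff_bot_notin by blast+
  moreover have "p z = bot" using supp_eq_bot_iff by blast
  ultimately show ?thesis
    using uclass_is_filter[OF _ assms(2)] unfolding is_proper_filter_psh_iff uclass_iff by auto
qed

lemma uclass_maximal:
  assumes uf: "is_ultrafilter UNIV (\<le>) F" and pa: "p a \<in> F"
    and G: "is_proper_filter UNIV (\<sqsubseteq>) G" "uclass p res F a \<subseteq> G"
  shows "G \<subseteq> uclass p res F a"
proof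
  have fF: "is_filter UNIV (\<le>) F" and fG: "is_filter UNIV (\<sqsubseteq>) G" and zG: "z \<notin> G"
    using ultrafilter_is_proper[OF uf] G(1)
    unfolding is_proper_filter_iff_bot_notin is_proper_filter_psh_iff by blast+
  fix y assume "y \<in> G"
  moreover have "a \<in> G" using self_in_uclass[OF pa] G(2) by blast
  ultimately obtain w where w: "w \<in> G" "w \<sqsubseteq> a" "w \<sqsubseteq> y" using filter_lower_bound[OF fG] by blast
  have "p w \<in> F"
  proof (rule ccontr)
    assume "p w \<notin> F"
    then obtain f where f: "f \<in> F" "inf f (p w) = bot" using ultrafilter_disjoint_mem[OF uf] by blast
    define e where "e = inf f (p a)"
    have "res a e \<in> G" using res_in_uclass[OF filter_inf_mem[OF fF f(1) pa]] G(2)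
      unfolding e_def by auto
    then obtain u where u: "u \<in> G" "u \<sqsubseteq> w" "u \<sqsubseteq> res a e" using filter_lower_bound[OF fG w(1)] by blast
    have "p u \<le> inf f (p w)"
      using le_psh_supp[OF u(2)] le_psh_supp[OF u(3)] supp_res[of e a] by (simp add: e_def le_infI1)
    then have "u = z" using f(2) bot_unique supp_eq_bot_iff by metis
    then show False using u(1) zG by blast
  qed
  then show "y \<in> uclass p res F a"
    unfolding uclass_iff using w filter_up[OF fF _ UNIV_I le_psh_supp[OF w(3)]] by blast
qed

lemma uclass_is_ultrafilter:
  assumes "is_ultrafilter UNIV (\<le>) F" "p a \<in> F"
  shows "is_ultrafilter UNIV (\<sqsubseteq>) (uclass p res F a)"
  unfolding is_ultrafilter_def
  using uclass_is_proper_filter[OF ultrafilter_is_proper[OF assms(1)] assms(2)]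
    uclass_maximal[OF assms] by blast

definition supp_filter :: "'x set \<Rightarrow> 'b set" where
  "supp_filter U = {e. \<exists>u\<in>U. p u \<le> e}"

lemma supp_filter_is_proper_filter:
  assumes "is_proper_filter UNIV (\<sqsubseteq>) U"
  shows "is_proper_filter UNIV (\<le>) (supp_filter U)"
proof -
  have fU: "is_filter UNIV (\<sqsubseteq>) U" and zU: "z \<notin> U"
    using assms unfolding is_proper_filter_psh_iff by blast+
  have "is_filter UNIV (\<le>) (supp_filter U)"
    unfolding is_filter_def supp_filter_def
  proof (intro conjI ballI impI)
    show "{e. \<exists>u\<in>U. p u \<le> e} \<noteq> {}" using fU unfolding is_filter_def by blast
  next
    fix x y assume "x \<in> {e. \<exists>u\<in>U. p u \<le> e}" "y \<in> {e. \<exists>u\<in>U. p u \<le> e}"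
    then obtain u1 u2 where u: "u1 \<in> U" "u2 \<in> U" "p u1 \<le> x" "p u2 \<le> y" by blast
    then obtain w where "w \<in> U" "w \<sqsubseteq> u1" "w \<sqsubseteq> u2" using filter_lower_bound[OF fU] by blast
    then have "p w \<in> {e. \<exists>u\<in>U. p u \<le> e}" "p w \<le> x" "p w \<le> y"
      using u(3,4) le_psh_supp order_trans by blast+
    then show "\<exists>v\<in>{e. \<exists>u\<in>U. p u \<le> e}. v \<le> x \<and> v \<le> y" by blast
  qed (auto intro: order_trans)
  moreover have "bot \<notin> supp_filter U"
  proof
    assume "bot \<in> supp_filter U"
    then obtain u where "u \<in> U" "p u = bot" unfolding supp_filter_def using bot_unique by blast
    then show False using zU by (simp add: supp_eq_bot_iff)
  qed
  ultimately show ?thesis unfolding is_proper_filter_iff_bot_notin by blast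
qed

definition lift_filter :: "'b set \<Rightarrow> 'x set \<Rightarrow> 'x set" where
  "lift_filter G U = {y. \<exists>u\<in>U. \<exists>e\<in>G. e \<le> p u \<and> res u e \<sqsubseteq> y}"

lemma lift_filterI: "u \<in> U \<Longrightarrow> e \<in> G \<Longrightarrow> e \<le> p u \<Longrightarrow> res u e \<sqsubseteq> y \<Longrightarrow> y \<in> lift_filter G U"
  unfolding lift_filter_def by blast

lemma lift_filterE:
  assumes "y \<in> lift_filter G U"
  obtains u e where "u \<in> U" "e \<in> G" "e \<le> p u" "res u e \<sqsubseteq> y"
  using assms unfolding lift_filter_def by blast

lemma subset_lift_filter:
  assumes "supp_filter U \<subseteq> G"
  shows "U \<subseteq> lift_filter G U"
proof
  fix u assume "u \<in> U"
  moreover have "p u \<in> G" using \<open>u \<in> U\<close> assms unfolding supp_filter_def by blast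
  ultimately show "u \<in> lift_filter G U" by (intro lift_filterI[of u U "p u"]) simp_all
qed

lemma lift_filter_is_filter:
  assumes fU: "is_filter UNIV (\<sqsubseteq>) U" and fG: "is_filter UNIV (\<le>) G" and UG: "supp_filter U \<subseteq> G"
  shows "is_filter UNIV (\<sqsubseteq>) (lift_filter G U)"
  unfolding is_filter_def
proof (intro conjI ballI impI)
  show "lift_filter G U \<noteq> {}" using subset_lift_filter[OF UG] fU unfolding is_filter_def by blast
next
  fix y1 y2 assume y1: "y1 \<in> lift_filter G U" and y2: "y2 \<in> lift_filter G U"
  obtain u1 e1 where h1: "u1 \<in> U" "e1 \<in> G" "e1 \<le> p u1" "res u1 e1 \<sqsubseteq> y1"
    using y1 by (rule lift_filterE)
  obtain u2 e2 where h2: "u2 \<in> U" "e2 \<in> G" "e2 \<le> p u2" "res u2 e2 \<sqsubseteq> y2"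
    using y2 by (rule lift_filterE)
  obtain w where w: "w \<in> U" "w \<sqsubseteq> u1" "w \<sqsubseteq> u2" using filter_lower_bound[OF fU h1(1) h2(1)] by blast
  have "p w \<in> G" using w(1) UG unfolding supp_filter_def by blast
  define f where "f = inf (inf e1 e2) (p w)"
  have fG': "f \<in> G" unfolding f_def using filter_inf_mem[OF fG filter_inf_mem[OF fG h1(2) h2(2)] \<open>p w \<in> G\<close>] .
  moreover have fw: "f \<le> p w" and "f \<le> e1" "f \<le> e2" unfolding f_def by (auto intro: le_infI1)
  moreover have "res w f \<sqsubseteq> y1"
    using res_le_psh_res[OF w(2) \<open>f \<le> e1\<close> h1(3) fw] h1(4) by (rule le_psh_trans)
  moreover have "res w f \<sqsubseteq> y2"
    using res_le_psh_res[OF w(3) \<open>f \<le> e2\<close> h2(3) fw] h2(4) by (rule le_psh_trans)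
  moreover have "res w f \<in> lift_filter G U" by (rule lift_filterI[OF w(1) fG' fw le_psh_refl])
  ultimately show "\<exists>v\<in>lift_filter G U. v \<sqsubseteq> y1 \<and> v \<sqsubseteq> y2" by blast
next
  fix x y assume "x \<in> lift_filter G U" "x \<sqsubseteq> y"
  then obtain u e where "u \<in> U" "e \<in> G" "e \<le> p u" "res u e \<sqsubseteq> x" by (blast elim: lift_filterE)
  with \<open>x \<sqsubseteq> y\<close> show "y \<in> lift_filter G U" by (blast intro: lift_filterI le_psh_trans)
qed (rule subset_UNIV)

lemma zero_notin_lift_filter:
  assumes "bot \<notin> G"
  shows "z \<notin> lift_filter G U"
proof
  assume "z \<in> lift_filter G U"
  then obtain u e where "e \<in> G" "e \<le> p u" "res u e \<sqsubseteq> z" by (rule lift_filterE)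
  then have "e \<le> p z" using le_psh_supp[of "res u e" z] supp_res[of e u] by simp
  then have "e = bot" using supp_eq_bot_iff[of z] by (simp add: bot_unique)
  then show False using \<open>e \<in> G\<close> assms by blast
qed

lemma lift_filter_is_proper_filter:
  assumes "is_filter UNIV (\<sqsubseteq>) U" "is_proper_filter UNIV (\<le>) G" "supp_filter U \<subseteq> G"
  shows "is_proper_filter UNIV (\<sqsubseteq>) (lift_filter G U)"
  using assms lift_filter_is_filter zero_notin_lift_filter
  unfolding is_proper_filter_iff_bot_notin is_proper_filter_psh_iff by blast

lemma subset_supp_lift_filter:
  assumes "is_filter UNIV (\<le>) G" "u \<in> U" "p u \<in> G"
  shows "G \<subseteq> supp_filter (lift_filter G U)"
proof
  fix g assume "g \<in> G"
  define e where "e = inf g (p u)"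
  have "e \<in> G" unfolding e_def using filter_inf_mem[OF assms(1) \<open>g \<in> G\<close> assms(3)] .
  moreover have "e \<le> p u" by (simp add: e_def)
  ultimately have "res u e \<in> lift_filter G U" using assms(2) le_psh_refl lift_filterI by blast
  moreover have "p (res u e) \<le> g" using supp_res[of e u] by (simp add: e_def)
  ultimately show "g \<in> supp_filter (lift_filter G U)" unfolding supp_filter_def by blast
qed

lemma supp_filter_is_ultrafilter:
  assumes uU: "is_ultrafilter UNIV (\<sqsubseteq>) U"
  shows "is_ultrafilter UNIV (\<le>) (supp_filter U)"
  unfolding is_ultrafilter_def
proof (intro conjI allI impI)
  have pU: "is_proper_filter UNIV (\<sqsubseteq>) U" using ultrafilter_is_proper[OF uU] .
  then show "is_proper_filter UNIV (\<le>) (supp_filter U)" by (rule supp_filter_is_proper_filter)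
  fix G assume G: "is_proper_filter UNIV (\<le>) G \<and> supp_filter U \<subseteq> G"
  have fU: "is_filter UNIV (\<sqsubseteq>) U" using pU unfolding is_proper_filter_def by blast
  then obtain u where u: "u \<in> U" unfolding is_filter_def by blast
  have "lift_filter G U = U"
    using ultrafilter_maximal[OF uU lift_filter_is_proper_filter[OF fU]] subset_lift_filter G by blast
  moreover have "p u \<in> G" using G u unfolding supp_filter_def by blast
  moreover have "is_filter UNIV (\<le>) G" using G unfolding is_proper_filter_def by blast
  ultimately have "G \<subseteq> supp_filter U" using subset_supp_lift_filter[OF _ u, of G] by simp
  with G show "G = supp_filter U" by blast
qed

lemma ultrafilter_eq_uclass:
  assumes uU: "is_ultrafilter UNIV (\<sqsubseteq>) U" and a: "a \<in> U"
  shows "U = uclass p res (supp_filter U) a"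
proof -
  have fU: "is_filter UNIV (\<sqsubseteq>) U"
    using ultrafilter_is_proper[OF uU] unfolding is_proper_filter_def by blast
  have pa: "p a \<in> supp_filter U" using a unfolding supp_filter_def by blast
  have "U \<subseteq> uclass p res (supp_filter U) a"
  proof
    fix y assume "y \<in> U"
    then obtain w where "w \<in> U" "w \<sqsubseteq> a" "w \<sqsubseteq> y" using filter_lower_bound[OF fU a] by blast
    then show "y \<in> uclass p res (supp_filter U) a"
      unfolding uclass_iff supp_filter_def using \<open>y \<in> U\<close> by blast
  qed
  moreover have "is_proper_filter UNIV (\<sqsubseteq>) (uclass p res (supp_filter U) a)"
    using uclass_is_ultrafilter[OF supp_filter_is_ultrafilter[OF uU] pa] by (rule ultrafilter_is_proper)
  ultimately show ?thesis using ultrafilter_maximal[OF uU] by blast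
qed

lemma ultrafilter_uclass_repr:
  assumes "is_ultrafilter UNIV (\<sqsubseteq>) U"
  shows "\<exists>F a. is_ultrafilter UNIV (\<le>) F \<and> p a \<in> F \<and> U = uclass p res F a"
proof -
  obtain a where a: "a \<in> U"
    using ultrafilter_is_proper[OF assms] unfolding is_proper_filter_def is_filter_def by blast
  then have "p a \<in> supp_filter U" unfolding supp_filter_def by blast
  with a show ?thesis using ultrafilter_eq_uclass[OF assms] supp_filter_is_ultrafilter[OF assms] by blast
qed

end

lemma boolean_set_pointed_presheaf:
  assumes "boolean_set p res"
  shows "\<exists>z. pointed_presheaf p res z"
proof -
  have "presheaf p res" using assms unfolding boolean_set_def by blast
  moreover obtain z where "\<forall>x. psh_le p res z x" and zb: "\<forall>x. p x = bot \<longrightarrow> x = z"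
    using assms unfolding boolean_set_def by blast
  moreover obtain x0 where "p x0 = bot" using assms unfolding boolean_set_def global_support_def by blast
  then have "p z = bot" using zb by blast
  ultimately have "pointed_presheaf p res z"
    unfolding pointed_presheaf_def pointed_presheaf_axioms_def presheaf_order_def by blast
  then show ?thesis ..
qed

theorem proposition3p6:
  fixes p :: "'x \<Rightarrow> 'b::{distrib_lattice, order_bot}" and res :: "'x \<Rightarrow> 'b \<Rightarrow> 'x"
  assumes "boolean_set p res"
  shows "(\<forall>F a. is_ultrafilter UNIV (\<le>) F \<and> p a \<in> F \<longrightarrow>
              is_ultrafilter UNIV (psh_le p res) (uclass p res F a))
       \<and> (\<forall>U. is_ultrafilter UNIV (psh_le p res) U \<longrightarrow>
              (\<exists>F a. is_ultrafilter UNIV (\<le>) F \<and> p a \<in> F \<and> U = uclass p res F a))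
       \<and> (\<forall>F a b. is_ultrafilter UNIV (\<le>) F \<and> p a \<in> F \<and> p b \<in> F \<and>
              uclass p res F a \<inter> uclass p res F b \<noteq> {} \<longrightarrow>
              uclass p res F a = uclass p res F b)"
proof -
  obtain z where "pointed_presheaf p res z" using boolean_set_pointed_presheaf[OF assms] by blast
  then interpret pointed_presheaf p res z .
  have filter: "is_filter UNIV (\<le>) F" if "is_ultrafilter UNIV (\<le>) F" for F
    using ultrafilter_is_proper[OF that] unfolding is_proper_filter_def by blast
  show ?thesis
  proof (intro conjI allI impI; (elim conjE)?)
    show "is_ultrafilter UNIV (\<sqsubseteq>) (uclass p res F a)"
      if "is_ultrafilter UNIV (\<le>) F" "p a \<in> F" for F a
      using that by (rule uclass_is_ultrafilter)
    show "\<exists>F a. is_ultrafilter UNIV (\<le>) F \<and> p a \<in> F \<and> U = uclass p res F a"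
      if "is_ultrafilter UNIV (\<sqsubseteq>) U" for U
      using that by (rule ultrafilter_uclass_repr)
    show "uclass p res F a = uclass p res F b"
      if "is_ultrafilter UNIV (\<le>) F" "p a \<in> F" "p b \<in> F"
        "uclass p res F a \<inter> uclass p res F b \<noteq> {}" for F a b
      using filter[OF that(1)] that(2-4) by (rule uclass_eq_of_not_disjoint)
  qed
qed
end
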